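(* Let $v\in\mathbb{R}$ and consider the system of ODEs for $(a,r,s)(\xi)\in\mathbb{R}^3$: $$\partial_\xi a=r,\qquad \partial_\xi r=-vr-\frac{sa}{2}+\frac{a|r|}{2},\qquad \partial_\xi s=-vs-ra.$$ Then each of the sets $I_1=\{r>0,\ s=2r\}$, $I_2=\{r>0,\ s=-r\}$, $I_3=\{r<0,\ s=r\}$, $I_4=\{r<0,\ s=-2r\}$ is invariant under the flow of this system, and so is each of the regions $R_1=\{s\ge-2r,\ s\ge 2r\}$, $R_2=\{s\le 2r,\ s\ge -r\}$, $R_3=\{s\le -r,\ s\le r\}$, $R_4=\{s\ge r,\ s\le-2r\}$.
   Context: Invariant means: any solution passing through a point of the set stays in the set for all $\xi$ in its interval of existence. The right-hand side of the system is locally Lipschitz, so solutions exist and are unique. *)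

theory Defs
  imports "HOL-Analysis.Analysis"
begin

definition rhs :: "real \<Rightarrow> real \<times> real \<times> real \<Rightarrow> real \<times> real \<times> real" where
  "rhs v = (\<lambda>(a, r, s). (r, - v * r - s * a / 2 + a * \<bar>r\<bar> / 2, - v * s - r * a))"

definition is_solution :: "real \<Rightarrow> (real \<Rightarrow> real \<times> real \<times> real) \<Rightarrow> real set \<Rightarrow> bool" where
  "is_solution v x T \<longleftrightarrow> is_interval T \<and>
     (\<forall>t\<in>T. (x has_vector_derivative rhs v (x t)) (at t within T))"

definition invariant :: "real \<Rightarrow> (real \<times> real \<times> real) set \<Rightarrow> bool" where
  "invariant v S \<longleftrightarrow> (\<forall>x T t0. is_solution v x T \<and> t0 \<in> T \<and> x t0 \<in> S \<longrightarrow> (\<forall>t\<in>T. x t \<in> S))"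

end

theory Submission
  imports Defs
begin

(* The a-axis {r = s = 0} consists of equilibria, and along a solution f = r^2 + s^2 satisfies
   f' = -2 v f + a (r |r| - 3 r s), hence |f'| <= (2 |v| + 3 |a|) f.  On the half-plane
   {sigma r > 0}, where |r| = sigma r, the defect w = s - k r satisfies
   w' = (k a / 2 - v) w + a r (k^2 - sigma k - 2) / 2; the sets I_1, ..., I_4 are exactly the
   half-planes with k^2 = sigma k + 2.  As a is bounded near any given time, a Gronwall argument
   shows that a solution touching one of these sets stays in it for nearby times, while leaving
   the complement of a half-plane would mean passing through its closure, which only adds
   equilibria.  Each region R_j is a closed wedge whose boundary consists of two such half-planes
   and the axis, so near any time a solution in R_j stays either in the open wedge or in this
   invariant boundary.  Membership being locally constant in time, it is constant on the
   connected interval of existence. *)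

lemma deriv_bound_imp_zero:
  fixes f f' :: "real \<Rightarrow> real"
  assumes cont: "continuous_on (closed_segment t0 t1) f"
    and deriv: "\<And>u. u \<in> open_segment t0 t1 \<Longrightarrow> (f has_real_derivative f' u) (at u)"
    and bound: "\<And>u. u \<in> open_segment t0 t1 \<Longrightarrow> \<bar>f' u\<bar> \<le> K * f u"
    and "f t0 = 0" and "0 \<le> f t1"
  shows "f t1 = 0"
proof -
  have weighted_cont: "continuous_on (closed_segment t0 t1) (\<lambda>u. f u * exp (c * u))" for c
    by (rule continuous_on_mult[OF cont]) (intro continuous_intros)
  show ?thesis
  proof (cases "t0 \<le> t1")
    case True
    have "f t1 * exp (- K * t1) \<le> f t0 * exp (- K * t0)"
    proof (rule DERIV_nonpos_imp_decreasing_open[OF True])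
      fix u assume "t0 < u" "u < t1"
      then have u: "u \<in> open_segment t0 t1" by (simp add: open_segment_eq_real_ivl)
      have "((\<lambda>u. f u * exp (- K * u)) has_real_derivative (f' u - K * f u) * exp (- K * u)) (at u)"
        by (rule derivative_eq_intros deriv[OF u] refl | simp add: algebra_simps)+
      moreover have "(f' u - K * f u) * exp (- K * u) \<le> 0"
        using bound[OF u] by (simp add: mult_nonpos_nonneg)
      ultimately show "\<exists>y. ((\<lambda>u. f u * exp (- K * u)) has_real_derivative y) (at u) \<and> y \<le> 0"
        by blast
    qed (use weighted_cont[of "- K"] True in \<open>simp add: closed_segment_eq_real_ivl\<close>)
    with assms show ?thesis by (simp add: mult_le_0_iff)
  next
    case False
    have "f t1 * exp (K * t1) \<le> f t0 * exp (K * t0)"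
    proof (rule DERIV_nonneg_imp_increasing_open[of t1 t0])
      fix u assume "t1 < u" "u < t0"
      then have u: "u \<in> open_segment t0 t1" by (simp add: open_segment_eq_real_ivl)
      have "((\<lambda>u. f u * exp (K * u)) has_real_derivative (f' u + K * f u) * exp (K * u)) (at u)"
        by (rule derivative_eq_intros deriv[OF u] refl | simp add: algebra_simps)+
      moreover have "(f' u + K * f u) * exp (K * u) \<ge> 0"
        using bound[OF u] by simp
      ultimately show "\<exists>y. ((\<lambda>u. f u * exp (K * u)) has_real_derivative y) (at u) \<and> y \<ge> 0"
        by blast
    qed (use weighted_cont[of K] False in \<open>auto simp: closed_segment_eq_real_ivl\<close>)
    with assms show ?thesis by (simp add: mult_le_0_iff)
  qed
qed

lemma eventually_zero_of_deriv_bound: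
  fixes f f' :: "real \<Rightarrow> real"
  assumes T: "is_interval T" and t: "t \<in> T" and "f t = 0"
    and deriv: "\<And>u. u \<in> T \<Longrightarrow> (f has_real_derivative f' u) (at u within T)"
    and nonneg: "\<And>u. u \<in> T \<Longrightarrow> 0 \<le> f u"
    and "eventually (\<lambda>u. \<bar>f' u\<bar> \<le> K * f u) (at t within T)"
  shows "eventually (\<lambda>u. f u = 0) (at t within T)"
proof -
  obtain d where "d > 0" and d: "\<And>u. u \<in> T \<Longrightarrow> u \<noteq> t \<Longrightarrow> dist u t < d \<Longrightarrow> \<bar>f' u\<bar> \<le> K * f u"
    using assms(6) unfolding eventually_at by blast
  have "f u = 0" if u: "u \<in> T" "dist u t < d" for u
  proof (rule deriv_bound_imp_zero[of t u])
    have seg: "closed_segment t u \<subseteq> T"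
      using T t u by (meson is_interval_convex convex_contains_segment)
    then show "continuous_on (closed_segment t u) f"
      using DERIV_continuous_on[OF deriv] continuous_on_subset by blast
    fix w assume w: "w \<in> open_segment t u"
    then have wT: "w \<in> T"
      using seg segment_open_subset_closed by blast
    show "\<bar>f' w\<bar> \<le> K * f w"
    proof (rule d[OF wT])
      show "w \<noteq> t" using w by (simp add: open_segment_def)
      show "dist w t < d" using dist_in_open_segment[OF w] u by (simp add: dist_commute)
    qed
    have "at w within T = at w"
      by (rule at_within_open_subset[OF w _ order_trans[OF segment_open_subset_closed seg]])
        (simp add: open_segment_eq_real_ivl)
    then show "(f has_real_derivative f' w) (at w)"
      using deriv[OF wT] by simp
  qed (use assms u in auto)
  with \<open>d > 0\<close> show ?thesis
    unfolding eventually_at by blast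
qed

lemma eventually_solution_in_open:
  assumes "is_solution v x T" "t \<in> T" "open U" "x t \<in> U"
  shows "eventually (\<lambda>u. x u \<in> U) (at t within T)"
proof -
  have "continuous (at t within T) x"
    using assms(1,2) has_vector_derivative_continuous unfolding is_solution_def by blast
  then show ?thesis
    unfolding continuous_within using assms(3,4) by (rule topological_tendstoD)
qed

lemma invariantI_eventually:
  assumes stay: "\<And>x T t. is_solution v x T \<Longrightarrow> t \<in> T \<Longrightarrow> x t \<in> P \<Longrightarrow>
      eventually (\<lambda>u. x u \<in> P) (at t within T)"
    and avoid: "\<And>x T t. is_solution v x T \<Longrightarrow> t \<in> T \<Longrightarrow> x t \<notin> P \<Longrightarrow>
      eventually (\<lambda>u. x u \<notin> P) (at t within T)"
  shows "invariant v P"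
  unfolding invariant_def
proof (intro allI impI ballI)
  fix x T t0 t
  assume H: "is_solution v x T \<and> t0 \<in> T \<and> x t0 \<in> P" and "t \<in> T"
  have "connected T"
    using H is_interval_connected unfolding is_solution_def by blast
  then show "x t \<in> P"
  proof (rule connected_induction_simple[of T t0 t "\<lambda>u. x u \<in> P"])
    fix t' assume "t' \<in> T"
    have "eventually (\<lambda>u. x u \<in> P \<longleftrightarrow> x t' \<in> P) (at t' within T)"
      using stay[of x T t'] avoid[of x T t'] H \<open>t' \<in> T\<close>
      by (cases "x t' \<in> P") (auto elim: eventually_mono)
    then obtain d where "d > 0" and d: "\<forall>u\<in>T. u \<noteq> t' \<and> dist u t' < d \<longrightarrow> (x u \<in> P \<longleftrightarrow> x t' \<in> P)"
      unfolding eventually_at by blast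
    show "\<exists>U. openin (top_of_set T) U \<and> t' \<in> U \<and> (\<forall>y\<in>U. \<forall>z\<in>U. x y \<in> P \<longrightarrow> x z \<in> P)"
    proof (intro exI conjI)
      show "openin (top_of_set T) (T \<inter> ball t' d)"
        by (simp add: openin_open_Int)
      show "\<forall>y\<in>T \<inter> ball t' d. \<forall>z\<in>T \<inter> ball t' d. x y \<in> P \<longrightarrow> x z \<in> P"
        using d by (metis IntE dist_commute mem_ball)
    qed (use \<open>t' \<in> T\<close> \<open>d > 0\<close> in simp)
  qed (use H \<open>t \<in> T\<close> in auto)
qed

lemma invariantI_closed:
  assumes "closed P"
    and stay: "\<And>x T t. is_solution v x T \<Longrightarrow> t \<in> T \<Longrightarrow> x t \<in> P \<Longrightarrow>
      eventually (\<lambda>u. x u \<in> P) (at t within T)"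
  shows "invariant v P"
proof (rule invariantI_eventually[OF stay])
  fix x T t assume "is_solution v x T" "t \<in> T" "x t \<notin> P"
  with \<open>closed P\<close> show "eventually (\<lambda>u. x u \<notin> P) (at t within T)"
    using eventually_solution_in_open[of v x T t "- P"] by auto
qed

lemma eventually_in_invariant:
  assumes "invariant v P" "is_solution v x T" "t \<in> T" "x t \<in> P"
  shows "eventually (\<lambda>u. x u \<in> P) (at t within T)"
  using assms unfolding invariant_def eventually_at_filter by (auto intro: always_eventually)

lemma invariant_Un: "invariant v P \<Longrightarrow> invariant v Q \<Longrightarrow> invariant v (P \<union> Q)"
  unfolding invariant_def by blast

lemma invariant_closed_Un_open:
  assumes "invariant v B" "open U" "closed (U \<union> B)"
  shows "invariant v (U \<union> B)"
proof (rule invariantI_closed[OF assms(3)])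
  fix x T t assume sol: "is_solution v x T" "t \<in> T" and "x t \<in> U \<union> B"
  then show "eventually (\<lambda>u. x u \<in> U \<union> B) (at t within T)"
    using eventually_solution_in_open[OF sol assms(2)] eventually_in_invariant[OF assms(1) sol]
    by (auto elim: eventually_mono)
qed

lemma abs_mult_abs_diff_le_sum_squares:
  fixes r s :: real
  shows "\<bar>r * \<bar>r\<bar> - 3 * r * s\<bar> \<le> 3 * (r\<^sup>2 + s\<^sup>2)"
proof -
  have "\<bar>r * \<bar>r\<bar> - 3 * r * s\<bar> \<le> r\<^sup>2 + 3 * (\<bar>r\<bar> * \<bar>s\<bar>)"
    using abs_triangle_ineq4[of "r * \<bar>r\<bar>" "3 * r * s"] by (simp add: abs_mult power2_eq_square)
  also have "\<dots> \<le> 3 * (r\<^sup>2 + s\<^sup>2)"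
  proof -
    have "2 * (\<bar>r\<bar> * \<bar>s\<bar>) \<le> r\<^sup>2 + s\<^sup>2"
      using sum_squares_bound[of "\<bar>r\<bar>" "\<bar>s\<bar>"] by (simp add: mult.assoc)
    then show ?thesis
      using zero_le_power2[of r] zero_le_power2[of s] by (smt (verit))
  qed
  finally show ?thesis .
qed

locale solution =
  fixes v :: real and x :: "real \<Rightarrow> real \<times> real \<times> real" and T :: "real set"
  assumes is_solution: "is_solution v x T"
begin

abbreviation a :: "real \<Rightarrow> real" where "a u \<equiv> fst (x u)"
abbreviation r :: "real \<Rightarrow> real" where "r u \<equiv> fst (snd (x u))"
abbreviation s :: "real \<Rightarrow> real" where "s u \<equiv> snd (snd (x u))"

lemma interval: "is_interval T"
  using is_solution unfolding is_solution_def by blast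

lemma
  assumes "u \<in> T"
  shows a_deriv: "(a has_real_derivative r u) (at u within T)"
    and r_deriv: "(r has_real_derivative - v * r u - s u * a u / 2 + a u * \<bar>r u\<bar> / 2) (at u within T)"
    and s_deriv: "(s has_real_derivative - v * s u - r u * a u) (at u within T)"
proof -
  have "(x has_vector_derivative
      (r u, - v * r u - s u * a u / 2 + a u * \<bar>r u\<bar> / 2, - v * s u - r u * a u)) (at u within T)"
    using is_solution assms unfolding is_solution_def rhs_def by (simp add: case_prod_beta)
  note proj = bounded_linear.has_vector_derivative[OF bounded_linear_fst this]
    bounded_linear.has_vector_derivative[OF bounded_linear_fst
      bounded_linear.has_vector_derivative[OF bounded_linear_snd this]]
    bounded_linear.has_vector_derivative[OF bounded_linear_snd
      bounded_linear.has_vector_derivative[OF bounded_linear_snd this]]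
  then show "(a has_real_derivative r u) (at u within T)"
    and "(r has_real_derivative - v * r u - s u * a u / 2 + a u * \<bar>r u\<bar> / 2) (at u within T)"
    and "(s has_real_derivative - v * s u - r u * a u) (at u within T)"
    by (simp_all add: has_real_derivative_iff_has_vector_derivative)
qed

lemma eventually_abs_a_le:
  assumes "t \<in> T"
  shows "eventually (\<lambda>u. \<bar>a u\<bar> \<le> \<bar>a t\<bar> + 1) (at t within T)"
proof -
  have "(a \<longlongrightarrow> a t) (at t within T)"
    using DERIV_continuous[OF a_deriv[OF assms]] by (simp add: continuous_within)
  then have "eventually (\<lambda>u. dist (a u) (a t) < 1) (at t within T)"
    by (rule tendstoD) simp
  then show ?thesis
    by (rule eventually_mono) (simp add: dist_real_def)
qed

lemma eventually_equilibria:
  assumes t: "t \<in> T" and "r t = 0" and "s t = 0"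
  shows "eventually (\<lambda>u. r u = 0 \<and> s u = 0) (at t within T)"
proof -
  define f' where "f' u = 2 * r u * (- v * r u - s u * a u / 2 + a u * \<bar>r u\<bar> / 2)
    + 2 * s u * (- v * s u - r u * a u)" for u
  have deriv: "((\<lambda>u. (r u)\<^sup>2 + (s u)\<^sup>2) has_real_derivative f' u) (at u within T)" if "u \<in> T" for u
    unfolding f'_def by (rule derivative_eq_intros r_deriv s_deriv that refl | simp)+
  have bound: "\<bar>f' u\<bar> \<le> (2 * \<bar>v\<bar> + 3 * \<bar>a u\<bar>) * ((r u)\<^sup>2 + (s u)\<^sup>2)" for u
  proof -
    define F where "F = (r u)\<^sup>2 + (s u)\<^sup>2"
    have "0 \<le> F" by (simp add: F_def)
    have "\<bar>f' u\<bar> = \<bar>- 2 * v * F + a u * (r u * \<bar>r u\<bar> - 3 * r u * s u)\<bar>"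
      by (simp add: f'_def F_def algebra_simps power2_eq_square)
    also have "\<dots> \<le> 2 * \<bar>v\<bar> * F + \<bar>a u\<bar> * \<bar>r u * \<bar>r u\<bar> - 3 * r u * s u\<bar>"
      by (rule order_trans[OF abs_triangle_ineq]) (simp add: abs_mult \<open>0 \<le> F\<close>)
    also have "\<dots> \<le> 2 * \<bar>v\<bar> * F + \<bar>a u\<bar> * (3 * F)"
      unfolding F_def by (intro add_left_mono mult_left_mono abs_mult_abs_diff_le_sum_squares) simp
    finally show ?thesis by (simp add: F_def algebra_simps)
  qed
  have near: "eventually (\<lambda>u. \<bar>f' u\<bar> \<le> (2 * \<bar>v\<bar> + 3 * (\<bar>a t\<bar> + 1)) * ((r u)\<^sup>2 + (s u)\<^sup>2)) (at t within T)"
    using eventually_abs_a_le[OF t]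
    by (rule eventually_mono) (rule order_trans[OF bound], simp add: mult_right_mono)
  have "eventually (\<lambda>u. (r u)\<^sup>2 + (s u)\<^sup>2 = 0) (at t within T)"
    by (rule eventually_zero_of_deriv_bound[OF interval t _ deriv _ near]) (simp_all add: assms)
  then show ?thesis
    by (rule eventually_mono) simp
qed

lemma eventually_half_plane:
  assumes t: "t \<in> T" and \<sigma>: "\<bar>\<sigma>\<bar> = 1" and k: "k * k = \<sigma> * k + 2"
    and "\<sigma> * r t > 0" and "s t = k * r t"
  shows "eventually (\<lambda>u. \<sigma> * r u > 0 \<and> s u = k * r u) (at t within T)"
proof -
  have "((\<lambda>u. \<sigma> * r u) \<longlongrightarrow> \<sigma> * r t) (at t within T)"
    using DERIV_continuous[OF r_deriv[OF t]] by (intro tendsto_mult_left) (simp add: continuous_within)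
  then have pos: "eventually (\<lambda>u. \<sigma> * r u > 0) (at t within T)"
    using \<open>\<sigma> * r t > 0\<close> by (rule order_tendstoD)
  define w where "w u = s u - k * r u" for u
  define w' where "w' u = (- v * s u - r u * a u) - k * (- v * r u - s u * a u / 2 + a u * \<bar>r u\<bar> / 2)" for u
  define f' where "f' u = 2 * w u * w' u" for u
  have deriv: "((\<lambda>u. (w u)\<^sup>2) has_real_derivative f' u) (at u within T)" if "u \<in> T" for u
  proof -
    have "(w has_real_derivative w' u) (at u within T)"
      unfolding w_def w'_def by (rule DERIV_diff[OF s_deriv[OF that] DERIV_cmult[OF r_deriv[OF that]]])
    from DERIV_power[OF this, of 2] show ?thesis
      by (simp add: f'_def ac_simps)
  qed
  have f'_eq: "f' u = (k * a u - 2 * v) * (w u)\<^sup>2" if "\<sigma> * r u > 0" for u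
  proof -
    have abs_r: "\<bar>r u\<bar> = \<sigma> * r u"
      using that \<sigma> by (metis abs_mult abs_of_pos mult_1)
    have "f' u - (k * a u - 2 * v) * (w u)\<^sup>2 = w u * a u * r u * (k * k - \<sigma> * k - 2)"
      unfolding f'_def w'_def w_def abs_r by (simp add: algebra_simps power2_eq_square)
    with k show ?thesis by simp
  qed
  have near: "eventually (\<lambda>u. \<bar>f' u\<bar> \<le> (2 * \<bar>v\<bar> + \<bar>k\<bar> * (\<bar>a t\<bar> + 1)) * (w u)\<^sup>2) (at t within T)"
    using pos eventually_abs_a_le[OF t]
  proof eventually_elim
    case (elim u)
    have "\<bar>k * a u - 2 * v\<bar> \<le> \<bar>k\<bar> * \<bar>a u\<bar> + 2 * \<bar>v\<bar>"
      using abs_triangle_ineq4[of "k * a u" "2 * v"] by (simp add: abs_mult)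
    also have "\<dots> \<le> 2 * \<bar>v\<bar> + \<bar>k\<bar> * (\<bar>a t\<bar> + 1)"
      using elim(2) by (simp add: mult_left_mono)
    finally show ?case
      unfolding f'_eq[OF elim(1)] abs_mult by (simp add: mult_right_mono)
  qed
  have "eventually (\<lambda>u. (w u)\<^sup>2 = 0) (at t within T)"
    by (rule eventually_zero_of_deriv_bound[OF interval t _ deriv _ near]) (simp_all add: w_def assms)
  with pos show ?thesis
    by eventually_elim (simp add: w_def)
qed

end

definition equilibria :: "(real \<times> real \<times> real) set" where
  "equilibria = {(a, r, s). r = 0 \<and> s = 0}"

definition half_plane :: "real \<Rightarrow> real \<Rightarrow> (real \<times> real \<times> real) set" where
  "half_plane \<sigma> k = {(a, r, s). \<sigma> * r > 0 \<and> s = k * r}"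

lemma mem_equilibria: "p \<in> equilibria \<longleftrightarrow> fst (snd p) = 0 \<and> snd (snd p) = 0"
  by (auto simp: equilibria_def)

lemma mem_half_plane: "p \<in> half_plane \<sigma> k \<longleftrightarrow> \<sigma> * fst (snd p) > 0 \<and> snd (snd p) = k * fst (snd p)"
  by (auto simp: half_plane_def)

lemma closed_equilibria: "closed equilibria"
proof -
  have "equilibria = UNIV \<times> {(0, 0)}"
    by (auto simp: equilibria_def)
  then show ?thesis
    by (metis closed_Times closed_UNIV closed_singleton)
qed

lemma closed_half_plane_Un_equilibria:
  assumes "\<sigma> \<noteq> 0"
  shows "closed (half_plane \<sigma> k \<union> equilibria)"
proof -
  have "closed {p. 0 \<le> \<sigma> * fst (snd p) \<and> snd (snd p) = k * fst (snd p)}"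
    by (intro closed_Collect_conj closed_Collect_le closed_Collect_eq continuous_intros)
  moreover have "half_plane \<sigma> k \<union> equilibria = {p. 0 \<le> \<sigma> * fst (snd p) \<and> snd (snd p) = k * fst (snd p)}"
    using assms by (auto simp: mem_half_plane mem_equilibria less_le)
  ultimately show ?thesis
    by simp
qed

lemma invariant_equilibria: "invariant v equilibria"
proof (rule invariantI_closed[OF closed_equilibria])
  fix x T t assume "is_solution v x T" "t \<in> T" "x t \<in> equilibria"
  then show "eventually (\<lambda>u. x u \<in> equilibria) (at t within T)"
    using solution.eventually_equilibria[of v x T t] by (simp add: solution_def mem_equilibria)
qed

lemma invariant_half_plane:
  assumes "\<bar>\<sigma>\<bar> = 1" and "k * k = \<sigma> * k + 2"
  shows "invariant v (half_plane \<sigma> k)"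
proof (rule invariantI_eventually)
  fix x T t assume "is_solution v x T" "t \<in> T" "x t \<in> half_plane \<sigma> k"
  then show "eventually (\<lambda>u. x u \<in> half_plane \<sigma> k) (at t within T)"
    using solution.eventually_half_plane[of v x T t \<sigma> k] assms by (simp add: solution_def mem_half_plane)
next
  fix x T t assume sol: "is_solution v x T" "t \<in> T" and "x t \<notin> half_plane \<sigma> k"
  show "eventually (\<lambda>u. x u \<notin> half_plane \<sigma> k) (at t within T)"
  proof (cases "x t \<in> equilibria")
    case True
    have disjoint: "equilibria \<inter> half_plane \<sigma> k = {}"
      by (auto simp: mem_equilibria mem_half_plane)
    from eventually_in_invariant[OF invariant_equilibria sol True] show ?thesis
      by (rule eventually_mono) (use disjoint in blast)
  next
    case False
    have "\<sigma> \<noteq> 0"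
      using assms(1) by auto
    then have "open (- (half_plane \<sigma> k \<union> equilibria))"
      by (intro open_Compl closed_half_plane_Un_equilibria)
    moreover have "x t \<in> - (half_plane \<sigma> k \<union> equilibria)"
      using False \<open>x t \<notin> half_plane \<sigma> k\<close> by simp
    ultimately show ?thesis
      by (rule eventually_solution_in_open[OF sol, THEN eventually_mono]) simp
  qed
qed

lemma invariant_wedge:
  assumes "invariant v B" and "B \<subseteq> W"
    and W: "W = {(a, r, s). 0 \<le> \<alpha> * r + \<beta> * s \<and> 0 \<le> \<gamma> * r + \<delta> * s}"
    and edges: "\<And>a r s. (a, r, s) \<in> W \<Longrightarrow> \<alpha> * r + \<beta> * s = 0 \<or> \<gamma> * r + \<delta> * s = 0 \<Longrightarrow> (a, r, s) \<in> B"
  shows "invariant v W"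
proof -
  define U :: "(real \<times> real \<times> real) set"
    where "U = {p. 0 < \<alpha> * fst (snd p) + \<beta> * snd (snd p) \<and> 0 < \<gamma> * fst (snd p) + \<delta> * snd (snd p)}"
  have W': "W = {p. 0 \<le> \<alpha> * fst (snd p) + \<beta> * snd (snd p) \<and> 0 \<le> \<gamma> * fst (snd p) + \<delta> * snd (snd p)}"
    unfolding W by auto
  have "W = U \<union> B"
  proof
    show "W \<subseteq> U \<union> B"
      using edges unfolding W' U_def by fastforce
  qed (use \<open>B \<subseteq> W\<close> in \<open>auto simp: U_def W'\<close>)
  moreover have "open U"
    unfolding U_def by (intro open_Collect_conj open_Collect_less continuous_intros)
  moreover have "closed W"
    unfolding W' by (intro closed_Collect_conj closed_Collect_le continuous_intros)
  ultimately show ?thesis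
    using invariant_closed_Un_open[OF \<open>invariant v B\<close>] by simp
qed

theorem proposition1:
  fixes v :: real
  shows "invariant v {(a, r, s). r > 0 \<and> s = 2 * r}
     \<and> invariant v {(a, r, s). r > 0 \<and> s = - r}
     \<and> invariant v {(a, r, s). r < 0 \<and> s = r}
     \<and> invariant v {(a, r, s). r < 0 \<and> s = - 2 * r}
     \<and> invariant v {(a, r, s). s \<ge> - 2 * r \<and> s \<ge> 2 * r}
     \<and> invariant v {(a, r, s). s \<le> 2 * r \<and> s \<ge> - r}
     \<and> invariant v {(a, r, s). s \<le> - r \<and> s \<le> r}
     \<and> invariant v {(a, r, s). s \<ge> r \<and> s \<le> - 2 * r}"
proof -
  have I: "invariant v (half_plane 1 2)" "invariant v (half_plane 1 (- 1))"
    "invariant v (half_plane (- 1) 1)" "invariant v (half_plane (- 1) (- 2))"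
    by (simp_all add: invariant_half_plane)
  have edges: "invariant v (half_plane \<sigma> k \<union> half_plane \<sigma>' k' \<union> equilibria)"
    if "invariant v (half_plane \<sigma> k)" "invariant v (half_plane \<sigma>' k')" for \<sigma> k \<sigma>' k'
    by (intro invariant_Un invariant_equilibria that)
  have "invariant v {(a, r, s). s \<ge> - 2 * r \<and> s \<ge> 2 * r}"
    by (rule invariant_wedge[OF edges[OF I(4) I(1)], where \<alpha>=2 and \<beta>=1 and \<gamma>="-2" and \<delta>=1])
      (auto simp: half_plane_def equilibria_def)
  moreover have "invariant v {(a, r, s). s \<le> 2 * r \<and> s \<ge> - r}"
    by (rule invariant_wedge[OF edges[OF I(1) I(2)], where \<alpha>=2 and \<beta>="-1" and \<gamma>=1 and \<delta>=1])
      (auto simp: half_plane_def equilibria_def)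
  moreover have "invariant v {(a, r, s). s \<le> - r \<and> s \<le> r}"
    by (rule invariant_wedge[OF edges[OF I(2) I(3)], where \<alpha>="-1" and \<beta>="-1" and \<gamma>=1 and \<delta>="-1"])
      (auto simp: half_plane_def equilibria_def)
  moreover have "invariant v {(a, r, s). s \<ge> r \<and> s \<le> - 2 * r}"
    by (rule invariant_wedge[OF edges[OF I(3) I(4)], where \<alpha>="-1" and \<beta>=1 and \<gamma>="-2" and \<delta>="-1"])
      (auto simp: half_plane_def equilibria_def)
  ultimately show ?thesis
    using I by (simp add: half_plane_def)
qed

end
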